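(* Let $M$ be a $C^\infty$ manifold with a torsion-free linear connection $\nabla$, and let $p\in M$. Let $\mathcal{U}_s:=\{\nabla S|_p-\mathrm{sym}(\nabla S)|_p : S\in\mathcal{T}_2M\text{ symmetric}\}$ and $\mathcal{U}_a:=\{\nabla A|_p-\mathrm{alt}(\nabla A)|_p : A\in\mathcal{T}_2M\text{ alternating}\}$ (note $\mathrm{alt}(\nabla A)=dA$). Let $\mathcal U$ be either $\mathcal U_s$ or $\mathcal U_a$. Then for each of the four types $$y_{t'}^*(S\otimes U),\quad y_{t'}^*(U\otimes S),\quad y_{t'}^*(A\otimes U),\quad y_{t'}^*(U\otimes A),$$ where $S$ (resp. $A$) ranges over all symmetric (resp. alternating) covariant tensors of order 2 on $M_p$ and $U$ ranges over $\mathcal U$, the vector space of algebraic covariant derivative curvature tensors in $\mathcal{T}_5M_p$ equals the set of all finite sums of tensors of that type.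
   Context: $\mathbb{K}=\mathbb{R}$. $\mathrm{sym}$ and $\mathrm{alt}$ are total symmetrization/antisymmetrization over all three indices: $X_{(ijk)}=\frac16\sum_{q\in\mathcal S_3}X_{i_{q(1)}i_{q(2)}i_{q(3)}}$ with $(i_1,i_2,i_3)=(i,j,k)$, similarly with signs for alt. $\nabla S$ has components $S_{ij;k}$ (differentiation index last). Group ring elements act on order-$n$ covariant tensors by $(aT)_{i_1\ldots i_n}=\sum_q a(q)T_{i_{q(1)}\ldots i_{q(n)}}$; $a^*=\sum a(q)q^{-1}$ for $a=\sum a(q)q$; product $(p\cdot q)(i)=p(q(i))$. $(X\otimes Y)_{i_1\ldots i_5}=X_{i_1i_2}Y_{i_3i_4i_5}$ (resp. $X_{i_1i_2i_3}Y_{i_4i_5}$ when $X$ has order 3). $y_{t'}=\sum_{p\in\mathcal{H}_{t'}}\sum_{q\in\mathcal{V}_{t'}}\mathrm{sign}(q)\,p\cdot q\in\mathbb{K}[\mathcal{S}_5]$ is the Young symmetrizer of the tableau $t'$ with rows $(1,3,5)$ and $(2,4)$, where $\mathcal{H}_{t'}$, $\mathcal{V}_{t'}$ are the row- and column-preserving permutation groups of $t'$. A covariant tensor $\mathfrak{R}'$ of order 5 is an algebraic covariant derivative curvature tensor iff $\mathfrak{R}'_{ijklm}=-\mathfrak{R}'_{jiklm}=-\mathfrak{R}'_{ijlkm}=\mathfrak{R}'_{klijm}$, $\mathfrak{R}'_{ijklm}+\mathfrak{R}'_{iklj m}+\mathfrak{R}'_{iljkm}=0$, and $\mathfrak{R}'_{ijklm}+\mathfrak{R}'_{ijlmk}+\mathfrak{R}'_{ijmkl}=0$.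 *)

theory Defs
  imports Complex_Main "HOL-Combinatorics.Permutations" "HOL-Library.Function_Algebras"
begin

text \<open>Covariant tensors on the tangent space M_p, modelled on a finite index type 'n
  (components with respect to a basis).\<close>

type_synonym 'n tensor2 = "'n \<Rightarrow> 'n \<Rightarrow> real"
type_synonym 'n tensor3 = "'n \<Rightarrow> 'n \<Rightarrow> 'n \<Rightarrow> real"
type_synonym 'n tensor5 = "'n \<Rightarrow> 'n \<Rightarrow> 'n \<Rightarrow> 'n \<Rightarrow> 'n \<Rightarrow> real"

definition symmetric2 :: "'n tensor2 \<Rightarrow> bool" where
  "symmetric2 S \<longleftrightarrow> (\<forall>i j. S i j = S j i)"

definition alternating2 :: "'n tensor2 \<Rightarrow> bool" where
  "alternating2 A \<longleftrightarrow> (\<forall>i j. A i j = - A j i)"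

definition sym3 :: "'n tensor3 \<Rightarrow> 'n tensor3" where
  "sym3 X = (\<lambda>i j k. (X i j k + X j k i + X k i j + X j i k + X i k j + X k j i) / 6)"

definition alt3 :: "'n tensor3 \<Rightarrow> 'n tensor3" where
  "alt3 X = (\<lambda>i j k. (X i j k + X j k i + X k i j - X j i k - X i k j - X k j i) / 6)"

text \<open>At a point p, the values nabla S|_p of covariant derivatives of symmetric (resp. alternating)
  tensor fields S are exactly the order-3 tensors T with T_{ijk} = T_{jik} (resp. T_{ijk} = -T_{jik}),
  differentiation index last.\<close>
definition U_s :: "'n tensor3 set" where
  "U_s = {T - sym3 T | T. \<forall>i j k. T i j k = T j i k}"

definition U_a :: "'n tensor3 set" where
  "U_a = {T - alt3 T | T. \<forall>i j k. T i j k = - T j i k}"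

definition tprod23 :: "'n tensor2 \<Rightarrow> 'n tensor3 \<Rightarrow> 'n tensor5" where
  "tprod23 X Y = (\<lambda>i1 i2 i3 i4 i5. X i1 i2 * Y i3 i4 i5)"

definition tprod32 :: "'n tensor3 \<Rightarrow> 'n tensor2 \<Rightarrow> 'n tensor5" where
  "tprod32 X Y = (\<lambda>i1 i2 i3 i4 i5. X i1 i2 i3 * Y i4 i5)"

text \<open>Group ring K[S_5]: elements are coefficient functions on permutations of {1..5}.\<close>
definition S5 :: "(nat \<Rightarrow> nat) set" where
  "S5 = {q. q permutes {1..5}}"

definition tup5 :: "'n \<Rightarrow> 'n \<Rightarrow> 'n \<Rightarrow> 'n \<Rightarrow> 'n \<Rightarrow> nat \<Rightarrow> 'n" where
  "tup5 i1 i2 i3 i4 i5 k =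
     (if k = 1 then i1 else if k = 2 then i2 else if k = 3 then i3 else if k = 4 then i4 else i5)"

definition act5 :: "((nat \<Rightarrow> nat) \<Rightarrow> real) \<Rightarrow> 'n tensor5 \<Rightarrow> 'n tensor5" where
  "act5 a T = (\<lambda>i1 i2 i3 i4 i5. let ix = tup5 i1 i2 i3 i4 i5 in
     \<Sum>q\<in>S5. a q * T (ix (q 1)) (ix (q 2)) (ix (q 3)) (ix (q 4)) (ix (q 5)))"

text \<open>a^* = sum a(q) q^{-1}.\<close>
definition gstar :: "((nat \<Rightarrow> nat) \<Rightarrow> real) \<Rightarrow> ((nat \<Rightarrow> nat) \<Rightarrow> real)" where
  "gstar a = (\<lambda>r. if r \<in> S5 then a (inv r) else 0)"

text \<open>Tableau t' with rows (1,3,5), (2,4); columns (1,2), (3,4), (5).\<close>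
definition Ht :: "(nat \<Rightarrow> nat) set" where
  "Ht = {p \<in> S5. p ` {1,3,5} = {1,3,5} \<and> p ` {2,4} = {2,4}}"

definition Vt :: "(nat \<Rightarrow> nat) set" where
  "Vt = {q \<in> S5. q ` {1,2} = {1,2} \<and> q ` {3,4} = {3,4} \<and> q 5 = 5}"

text \<open>y_{t'} = sum_{p in H} sum_{q in V} sign(q) p.q, with (p.q)(i) = p(q(i)).\<close>
definition yt :: "(nat \<Rightarrow> nat) \<Rightarrow> real" where
  "yt = (\<lambda>r. \<Sum>p\<in>Ht. \<Sum>q\<in>Vt. if p \<circ> q = r then of_int (sign q) else 0)"

definition is_acdct :: "'n tensor5 \<Rightarrow> bool" where
  "is_acdct R \<longleftrightarrow>
     (\<forall>i j k l m.
        R i j k l m = - R j i k l m \<and>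
        R i j k l m = - R i j l k m \<and>
        R i j k l m = R k l i j m \<and>
        R i j k l m + R i k l j m + R i l j k m = 0 \<and>
        R i j k l m + R i j l m k + R i j m k l = 0)"

definition finsums :: "'a::monoid_add set \<Rightarrow> 'a set" where
  "finsums G = {sum_list xs | xs. set xs \<subseteq> G}"

end

theory Submission
  imports Defs
begin

(*
  The dual Young symmetrizer y*_t' acts on order-5 tensors as the symmetrization over the rows
  (1,3,5), (2,4) of t' followed by the antisymmetrization in its columns (1,2), (3,4).  Every
  tensor of this form, hence every finite sum of them, is an algebraic covariant derivative
  curvature tensor.

  Conversely such a tensor R is recovered as y*(Q) with Q(i1,...,i5) = Z(i1,i2) +- Z(i2,i1)
  evaluated at (i3,i4,i5) (or the analogous expression in the last two slots), where each Z(a,b)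
  lies in U and is built from the slice of R at a, b.  Expanding the two outer slots in matrix
  units writes Q as a finite sum of products S (x) u with S symmetric (+) or alternating (-).
  The identity y*(Q) = R is checked by reducing R at every permutation of (i,j,k,l,m) to the five
  values R_ijklm, R_ijkml, R_ikjlm, R_ikjml, R_iljmk: these tensors form the five-dimensional
  irreducible S_5-module of shape (3,2).
*)

section \<open>The row and column groups of the tableau\<close>

definition perm5 :: "nat \<Rightarrow> nat \<Rightarrow> nat \<Rightarrow> nat \<Rightarrow> nat \<Rightarrow> nat \<Rightarrow> nat" where
  "perm5 a b c d e x =
     (if x = 1 then a else if x = 2 then b else if x = 3 then c else if x = 4 then d
      else if x = 5 then e else x)"

text \<open>Both \<open>1\<close> and \<open>Suc 0\<close>: simp rewrites the numeral \<open>1 :: nat\<close> to \<open>Suc 0\<close> in some goals below.\<close>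

lemma perm5_simps [simp]:
  "perm5 a b c d e 1 = a" "perm5 a b c d e (Suc 0) = a" "perm5 a b c d e 2 = b"
  "perm5 a b c d e 3 = c" "perm5 a b c d e 4 = d" "perm5 a b c d e 5 = e"
  by (simp_all add: perm5_def)

lemma perm5_eq_iff [simp]:
  "perm5 a b c d e = perm5 a' b' c' d' e' \<longleftrightarrow> a = a' \<and> b = b' \<and> c = c' \<and> d = d' \<and> e = e'"
proof
  assume eq: "perm5 a b c d e = perm5 a' b' c' d' e'"
  from fun_cong[OF eq, of 1] fun_cong[OF eq, of 2] fun_cong[OF eq, of 3] fun_cong[OF eq, of 4]
    fun_cong[OF eq, of 5]
  show "a = a' \<and> b = b' \<and> c = c' \<and> d = d' \<and> e = e'"
    by simp
qed simp

lemma S5_eq_perm5: "p \<in> S5 \<Longrightarrow> p = perm5 (p 1) (p 2) (p 3) (p 4) (p 5)"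
  by (auto simp: S5_def perm5_def permutes_not_in)

lemma perm5_in_S5:
  assumes "{a, b, c, d, e} = {1, 2, 3, 4, 5}" and "distinct [a, b, c, d, e]"
  shows "perm5 a b c d e \<in> S5"
proof -
  have "{1..5::nat} = {1, 2, 3, 4, 5}"
    by auto
  moreover have "perm5 a b c d e permutes {1, 2, 3, 4, 5}"
  proof (rule bij_imp_permutes)
    have image: "perm5 a b c d e ` {1, 2, 3, 4, 5} = set [a, b, c, d, e]"
      by simp
    have "card (set [a, b, c, d, e]) = card {1, 2, 3, 4, 5::nat}"
      using distinct_card[OF assms(2)] by simp
    then have "inj_on (perm5 a b c d e) {1, 2, 3, 4, 5}"
      by (metis eq_card_imp_inj_on finite.emptyI finite_insert image)
    then show "bij_betw (perm5 a b c d e) {1, 2, 3, 4, 5} {1, 2, 3, 4, 5}"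
      using assms(1) image by (simp add: bij_betw_def)
  qed (simp add: perm5_def)
  ultimately show ?thesis
    by (simp add: S5_def)
qed

lemma Ht_eq:
  "Ht = {perm5 1 2 3 4 5, perm5 1 2 5 4 3, perm5 1 4 3 2 5, perm5 1 4 5 2 3,
         perm5 3 2 1 4 5, perm5 3 2 5 4 1, perm5 3 4 1 2 5, perm5 3 4 5 2 1,
         perm5 5 2 1 4 3, perm5 5 2 3 4 1, perm5 5 4 1 2 3, perm5 5 4 3 2 1}"
  (is "_ = ?H")
proof
  have rows: "perm5 a b c d e \<in> ?H"
    if "a \<in> {1, 3, 5}" "c \<in> {1, 3, 5}" "e \<in> {1, 3, 5}" "b \<in> {2, 4}" "d \<in> {2, 4}"
      "a \<noteq> c" "a \<noteq> e" "c \<noteq> e" "b \<noteq> d" for a b c d e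
    using that by (elim insertE emptyE; simp)
  show "Ht \<subseteq> ?H"
  proof
    fix p assume "p \<in> Ht"
    then have p: "p \<in> S5" "p ` {1, 3, 5} = {1, 3, 5}" "p ` {2, 4} = {2, 4}"
      by (simp_all add: Ht_def)
    then have "inj p"
      by (simp add: S5_def permutes_inj)
    then have "p 1 \<noteq> p 3" "p 1 \<noteq> p 5" "p 3 \<noteq> p 5" "p 2 \<noteq> p 4"
      by (simp_all add: inj_eq)
    moreover have "p 1 \<in> {1, 3, 5}" "p 3 \<in> {1, 3, 5}" "p 5 \<in> {1, 3, 5}"
      "p 2 \<in> {2, 4}" "p 4 \<in> {2, 4}"
      using p(2,3) by blast+
    ultimately have "perm5 (p 1) (p 2) (p 3) (p 4) (p 5) \<in> ?H"
      by (intro rows)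
    with S5_eq_perm5[OF p(1)] show "p \<in> ?H"
      by simp
  qed
  show "?H \<subseteq> Ht"
    by (simp add: Ht_def perm5_in_S5 insert_commute)
qed

lemma Vt_eq: "Vt = {perm5 1 2 3 4 5, perm5 1 2 4 3 5, perm5 2 1 3 4 5, perm5 2 1 4 3 5}"
  (is "_ = ?V")
proof
  show "Vt \<subseteq> ?V"
  proof
    fix q assume "q \<in> Vt"
    then have q: "q \<in> S5" "q ` {1, 2} = {1, 2}" "q ` {3, 4} = {3, 4}" "q 5 = 5"
      by (simp_all add: Vt_def)
    then have "inj q"
      by (simp add: S5_def permutes_inj)
    then have "q 1 \<noteq> q 2" "q 3 \<noteq> q 4"
      by (simp_all add: inj_eq)
    moreover have "q 1 \<in> {1, 2}" "q 2 \<in> {1, 2}" "q 3 \<in> {3, 4}" "q 4 \<in> {3, 4}"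
      using q(2,3) by blast+
    ultimately have "perm5 (q 1) (q 2) (q 3) (q 4) (q 5) \<in> ?V"
      using q(4) by (elim insertE emptyE; simp)
    with S5_eq_perm5[OF q(1)] show "q \<in> ?V"
      by simp
  qed
  show "?V \<subseteq> Vt"
    by (simp add: Vt_def perm5_in_S5 insert_commute)
qed

lemma sign_Vt:
  "sign (perm5 1 2 3 4 5) = 1" "sign (perm5 1 2 4 3 5) = -1"
  "sign (perm5 2 1 3 4 5) = -1" "sign (perm5 2 1 4 3 5) = 1"
proof -
  have "perm5 1 2 3 4 5 = id" "perm5 1 2 4 3 5 = transpose 3 4" "perm5 2 1 3 4 5 = transpose 1 2"
    "perm5 2 1 4 3 5 = transpose 1 2 \<circ> transpose 3 4"
    by (auto simp: fun_eq_iff perm5_def transpose_def)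
  then show "sign (perm5 1 2 3 4 5) = 1" "sign (perm5 1 2 4 3 5) = -1"
    "sign (perm5 2 1 3 4 5) = -1" "sign (perm5 2 1 4 3 5) = 1"
    by (simp_all add: sign_swap_id sign_compose permutation_swap_id)
qed

lemma finite_S5: "finite S5"
  by (simp add: S5_def finite_permutations)

lemma permutation_S5: "p \<in> S5 \<Longrightarrow> permutation p"
  by (auto simp: S5_def permutation_permutes)

lemma inv_closed_S5: "p \<in> S5 \<Longrightarrow> bij p \<and> inv p \<in> S5"
  by (simp add: S5_def permutes_bij permutes_inv)

lemma image_inv_eq: "bij p \<Longrightarrow> p ` A = A \<Longrightarrow> inv p ` A = A"
  by (metis bij_is_inj image_inv_f_f)

lemma inv_closed_Ht:
  assumes "p \<in> Ht"
  shows "bij p \<and> inv p \<in> Ht"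
proof -
  from assms have p: "p \<in> S5" "p ` {1, 3, 5} = {1, 3, 5}" "p ` {2, 4} = {2, 4}"
    by (simp_all add: Ht_def)
  with inv_closed_S5 have "bij p" "inv p \<in> S5"
    by blast+
  with image_inv_eq[OF _ p(2)] image_inv_eq[OF _ p(3)] show ?thesis
    unfolding Ht_def by blast
qed

lemma inv_closed_Vt:
  assumes "q \<in> Vt"
  shows "bij q \<and> inv q \<in> Vt"
proof -
  from assms have q: "q \<in> S5" "q ` {1, 2} = {1, 2}" "q ` {3, 4} = {3, 4}" "q 5 = 5"
    by (simp_all add: Vt_def)
  with inv_closed_S5 have "bij q" "inv q \<in> S5"
    by blast+
  moreover from q(4) \<open>bij q\<close> have "inv q 5 = 5"
    by (simp add: bij_is_inj inv_f_eq)
  ultimately show ?thesis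
    using image_inv_eq[OF _ q(2)] image_inv_eq[OF _ q(3)] unfolding Vt_def by blast
qed

lemma sum_reindex_inv:
  assumes "\<And>p. p \<in> A \<Longrightarrow> bij p \<and> inv p \<in> A"
  shows "(\<Sum>p\<in>A. f (inv p)) = sum f A"
  by (rule sum.reindex_bij_witness[of _ inv inv]) (simp_all add: assms inv_inv_eq)

lemma sum_gstar_yt:
  "(\<Sum>r\<in>S5. gstar yt r * F r) = (\<Sum>p\<in>Ht. \<Sum>q\<in>Vt. of_int (sign q) * F (q \<circ> p))"
proof -
  have comp_S5: "p \<circ> q \<in> S5" if "p \<in> Ht" "q \<in> Vt" for p q
    using that by (simp add: Ht_def Vt_def S5_def permutes_compose)
  have sign_inv: "sign (inv q) = sign q" if "q \<in> Vt" for q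
    using that by (simp add: Vt_def permutation_S5 sign_inverse)
  have "(\<Sum>r\<in>S5. gstar yt r * F r) = (\<Sum>s\<in>S5. yt s * F (inv s))"
    using sum_reindex_inv[OF inv_closed_S5, of "\<lambda>r. yt (inv r) * F r"]
    by (simp add: gstar_def inv_closed_S5 inv_inv_eq)
  also have "\<dots> = (\<Sum>s\<in>S5. \<Sum>p\<in>Ht. \<Sum>q\<in>Vt.
      if p \<circ> q = s then of_int (sign q) * F (inv s) else 0)"
    unfolding yt_def sum_distrib_right by (intro sum.cong refl) simp
  also have "\<dots> = (\<Sum>p\<in>Ht. \<Sum>q\<in>Vt. \<Sum>s\<in>S5.
      if p \<circ> q = s then of_int (sign q) * F (inv s) else 0)"
    by (simp add: sum.swap[of _ S5])
  also have "\<dots> = (\<Sum>p\<in>Ht. \<Sum>q\<in>Vt. of_int (sign q) * F (inv (p \<circ> q)))"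
    by (intro sum.cong refl) (simp add: finite_S5 comp_S5)
  also have "\<dots> = (\<Sum>p\<in>Ht. \<Sum>q\<in>Vt. of_int (sign (inv q)) * F (inv q \<circ> inv p))"
    using inv_closed_Ht inv_closed_Vt
    by (intro sum.cong refl) (simp add: o_inv_distrib sign_inv)
  also have "\<dots> = (\<Sum>p\<in>Ht. \<Sum>q\<in>Vt. of_int (sign q) * F (q \<circ> inv p))"
    by (intro sum.cong refl sum_reindex_inv[OF inv_closed_Vt, of "\<lambda>q. of_int (sign q) * F (q \<circ> inv _)"])
  also have "\<dots> = (\<Sum>p\<in>Ht. \<Sum>q\<in>Vt. of_int (sign q) * F (q \<circ> p))"
    by (rule sum_reindex_inv[OF inv_closed_Ht, of "\<lambda>p. \<Sum>q\<in>Vt. of_int (sign q) * F (q \<circ> p)"])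
  finally show ?thesis .
qed

section \<open>The dual Young symmetrizer\<close>

definition row_sym :: "'n tensor5 \<Rightarrow> 'n tensor5" where
  "row_sym T = (\<lambda>i1 i2 i3 i4 i5.
     T i1 i2 i3 i4 i5 + T i1 i2 i5 i4 i3 + T i1 i4 i3 i2 i5 + T i1 i4 i5 i2 i3 +
     T i3 i2 i1 i4 i5 + T i3 i2 i5 i4 i1 + T i3 i4 i1 i2 i5 + T i3 i4 i5 i2 i1 +
     T i5 i2 i1 i4 i3 + T i5 i2 i3 i4 i1 + T i5 i4 i1 i2 i3 + T i5 i4 i3 i2 i1)"

definition col_alt :: "'n tensor5 \<Rightarrow> 'n tensor5" where
  "col_alt T = (\<lambda>i1 i2 i3 i4 i5.
     T i1 i2 i3 i4 i5 - T i1 i2 i4 i3 i5 - T i2 i1 i3 i4 i5 + T i2 i1 i4 i3 i5)"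

lemma act5_gstar_yt: "act5 (gstar yt) T = col_alt (row_sym T)"
  unfolding act5_def Let_def sum_gstar_yt Ht_eq Vt_eq
  by (intro ext) (simp add: sign_Vt[simplified] tup5_def row_sym_def col_alt_def)

lemma is_acdct_col_alt_row_sym: "is_acdct (col_alt (row_sym T))"
  by (simp add: is_acdct_def row_sym_def col_alt_def algebra_simps)

lemma sum_fun_apply: "(\<Sum>x\<in>A. f x) y = (\<Sum>x\<in>A. f x y)"
  by (induction A rule: infinite_finite_induct) simp_all

lemma act5_zero: "act5 a 0 = 0"
  by (simp add: fun_eq_iff act5_def)

lemma act5_add: "act5 a (T + T') = act5 a T + act5 a T'"
  by (simp add: fun_eq_iff act5_def Let_def distrib_left sum.distrib)

lemma act5_sum: "act5 a (\<Sum>p\<in>A. T p) = (\<Sum>p\<in>A. act5 a (T p))"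
  unfolding act5_def Let_def sum_fun_apply sum_distrib_left by (intro ext) (rule sum.swap)

lemma in_finsums: "x \<in> G \<Longrightarrow> x \<in> finsums G"
  unfolding finsums_def by (auto intro!: exI[of _ "[x]"])

lemma sum_in_finsums:
  assumes "\<And>x. x \<in> A \<Longrightarrow> f x \<in> finsums G"
  shows "sum f A \<in> finsums G"
  using assms
proof (induction A rule: infinite_finite_induct)
  case (insert x A)
  then obtain xs ys where "f x = sum_list xs" "set xs \<subseteq> G" "sum f A = sum_list ys" "set ys \<subseteq> G"
    unfolding finsums_def by blast
  with insert.hyps have "sum f (insert x A) = sum_list (xs @ ys)" "set (xs @ ys) \<subseteq> G"
    by simp_all
  then show ?case
    unfolding finsums_def by blast
qed (auto simp: finsums_def intro!: exI[of _ "[]"])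

lemma finsums_subset:
  assumes "G \<subseteq> S" and "0 \<in> S" and "\<And>x y. x \<in> S \<Longrightarrow> y \<in> S \<Longrightarrow> x + y \<in> S"
  shows "finsums G \<subseteq> S"
proof
  fix x assume "x \<in> finsums G"
  then obtain xs where "x = sum_list xs" "set xs \<subseteq> G"
    unfolding finsums_def by blast
  moreover have "sum_list ys \<in> S" if "set ys \<subseteq> G" for ys
    using that by (induction ys) (use assms in auto)
  ultimately show "x \<in> S"
    by simp
qed

lemma acdct_eq_finsums:
  assumes "G \<subseteq> range (act5 (gstar yt))" and "\<And>R. is_acdct R \<Longrightarrow> R \<in> finsums G"
  shows "{R. is_acdct R} = finsums G"
proof
  show "{R. is_acdct R} \<subseteq> finsums G"
    using assms(2) by blast
  have "finsums G \<subseteq> range (act5 (gstar yt))"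
  proof (rule finsums_subset[OF assms(1)])
    show "0 \<in> range (act5 (gstar yt))"
      using act5_zero by (metis rangeI)
    fix x y :: "'n tensor5"
    assume "x \<in> range (act5 (gstar yt))" "y \<in> range (act5 (gstar yt))"
    then obtain T T' where "x = act5 (gstar yt) T" "y = act5 (gstar yt) T'"
      by blast
    then show "x + y \<in> range (act5 (gstar yt))"
      by (simp add: act5_add[symmetric])
  qed
  then show "finsums G \<subseteq> {R. is_acdct R}"
    by (auto simp: act5_gstar_yt is_acdct_col_alt_row_sym)
qed

section \<open>Expansion in matrix units\<close>

definition pair_unit :: "real \<Rightarrow> 'n \<Rightarrow> 'n \<Rightarrow> 'n tensor2" where
  "pair_unit \<epsilon> a b = (\<lambda>x y. (if x = a \<and> y = b then 1 else 0) + \<epsilon> * (if x = b \<and> y = a then 1 else 0))"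

lemma symmetric2_pair_unit: "symmetric2 (pair_unit 1 a b)"
  unfolding symmetric2_def pair_unit_def by (simp add: conj_commute add.commute)

lemma alternating2_pair_unit: "alternating2 (pair_unit (- 1) a b)"
  unfolding alternating2_def pair_unit_def by (simp add: conj_commute)

lemma sum_pair_unit:
  fixes F :: "'n::finite \<Rightarrow> 'n \<Rightarrow> real"
  shows "(\<Sum>a\<in>UNIV. \<Sum>b\<in>UNIV. pair_unit \<epsilon> a b x y * F a b) = F x y + \<epsilon> * F y x"
proof -
  have "pair_unit \<epsilon> a b x y * F a b =
      (if b = y then if a = x then F a b else 0 else 0) + \<epsilon> * (if b = x then if a = y then F a b else 0 else 0)"
    for a b
    by (auto simp: pair_unit_def algebra_simps)
  then show ?thesis
    by (simp add: sum.distrib sum_distrib_left[symmetric])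
qed

definition pair12 :: "real \<Rightarrow> 'n tensor5 \<Rightarrow> 'n tensor5" where
  "pair12 \<epsilon> Z = (\<lambda>i1 i2 i3 i4 i5. Z i1 i2 i3 i4 i5 + \<epsilon> * Z i2 i1 i3 i4 i5)"

definition pair45 :: "real \<Rightarrow> 'n tensor5 \<Rightarrow> 'n tensor5" where
  "pair45 \<epsilon> W = (\<lambda>i1 i2 i3 i4 i5. W i4 i5 i1 i2 i3 + \<epsilon> * W i5 i4 i1 i2 i3)"

lemma pair12_eq_sum:
  fixes Z :: "('n::finite) tensor5"
  shows "pair12 \<epsilon> Z = (\<Sum>a\<in>UNIV. \<Sum>b\<in>UNIV. tprod23 (pair_unit \<epsilon> a b) (Z a b))"
  by (simp add: fun_eq_iff sum_fun_apply tprod23_def pair12_def sum_pair_unit)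

lemma pair45_eq_sum:
  fixes W :: "('n::finite) tensor5"
  shows "pair45 \<epsilon> W = (\<Sum>a\<in>UNIV. \<Sum>b\<in>UNIV. tprod32 (W a b) (pair_unit \<epsilon> a b))"
  by (simp add: fun_eq_iff sum_fun_apply tprod32_def pair45_def sum_pair_unit mult.commute)

lemma acdct_eq_finsums_pair12:
  fixes Z :: "('n::finite) tensor5 \<Rightarrow> 'n tensor5"
  assumes preimage: "\<And>R i1 i2 i3 i4 i5. is_acdct R \<Longrightarrow>
      act5 (gstar yt) (pair12 \<epsilon> (Z R)) i1 i2 i3 i4 i5 = R i1 i2 i3 i4 i5"
    and "\<And>R a b. Z R a b \<in> U" and "\<And>a b. P (pair_unit \<epsilon> a b)"
  shows "{R. is_acdct R} = finsums {act5 (gstar yt) (tprod23 S u) | S u. P S \<and> u \<in> U}"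
proof (rule acdct_eq_finsums)
  fix R :: "'n tensor5"
  assume "is_acdct R"
  then have "R = act5 (gstar yt) (pair12 \<epsilon> (Z R))"
    by (simp add: fun_eq_iff preimage)
  also have "\<dots> = (\<Sum>a\<in>UNIV. \<Sum>b\<in>UNIV. act5 (gstar yt) (tprod23 (pair_unit \<epsilon> a b) (Z R a b)))"
    by (simp add: pair12_eq_sum act5_sum)
  also have "\<dots> \<in> finsums {act5 (gstar yt) (tprod23 S u) | S u. P S \<and> u \<in> U}"
    by (intro sum_in_finsums in_finsums) (use assms(2,3) in blast)
  finally show "R \<in> finsums {act5 (gstar yt) (tprod23 S u) | S u. P S \<and> u \<in> U}" .
qed blast

lemma acdct_eq_finsums_pair45:
  fixes W :: "('n::finite) tensor5 \<Rightarrow> 'n tensor5"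
  assumes preimage: "\<And>R i1 i2 i3 i4 i5. is_acdct R \<Longrightarrow>
      act5 (gstar yt) (pair45 \<epsilon> (W R)) i1 i2 i3 i4 i5 = R i1 i2 i3 i4 i5"
    and "\<And>R a b. W R a b \<in> U" and "\<And>a b. P (pair_unit \<epsilon> a b)"
  shows "{R. is_acdct R} = finsums {act5 (gstar yt) (tprod32 u S) | S u. P S \<and> u \<in> U}"
proof (rule acdct_eq_finsums)
  fix R :: "'n tensor5"
  assume "is_acdct R"
  then have "R = act5 (gstar yt) (pair45 \<epsilon> (W R))"
    by (simp add: fun_eq_iff preimage)
  also have "\<dots> = (\<Sum>a\<in>UNIV. \<Sum>b\<in>UNIV. act5 (gstar yt) (tprod32 (W R a b) (pair_unit \<epsilon> a b)))"
    by (simp add: pair45_eq_sum act5_sum)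
  also have "\<dots> \<in> finsums {act5 (gstar yt) (tprod32 u S) | S u. P S \<and> u \<in> U}"
    by (intro sum_in_finsums in_finsums) (use assms(2,3) in blast)
  finally show "R \<in> finsums {act5 (gstar yt) (tprod32 u S) | S u. P S \<and> u \<in> U}" .
qed blast

section \<open>A normal form for algebraic covariant derivative curvature tensors\<close>

lemma is_acdctD:
  assumes "is_acdct R"
  shows "R a b c d e = - R b a c d e" "R a b c d e = - R a b d c e" "R a b c d e = R c d a b e"
    "R a b c d e + R a c d b e + R a d b c e = 0" "R a b c d e + R a b d e c + R a b e c d = 0"
  using assms unfolding is_acdct_def by blast+

lemma acdct_orbit:
  assumes "is_acdct R"
  shows "R b a c d e = - R a b c d e" "R a b d c e = - R a b c d e" "R b a d c e = R a b c d e"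
    "R c d a b e = R a b c d e" "R d c a b e = - R a b c d e" "R c d b a e = - R a b c d e"
    "R d c b a e = R a b c d e"
  using is_acdctD(1-3)[OF assms, of b a c d e] is_acdctD(1-3)[OF assms, of a b d c e]
    is_acdctD(1-3)[OF assms, of b a d c e] is_acdctD(3)[OF assms, of c d a b e]
    is_acdctD(3)[OF assms, of d c a b e] is_acdctD(3)[OF assms, of c d b a e]
    is_acdctD(3)[OF assms, of d c b a e]
  by linarith+

lemma acdct_first_bianchi:
  assumes "is_acdct R"
  shows "R a d b c e = R a c b d e - R a b c d e"
  using is_acdctD(4)[OF assms, of a b c d e] is_acdctD(2)[OF assms, of a c b d e] by linarith

lemma acdct_last_index:
  assumes "is_acdct R"
  shows "R i j l m k = R i j k m l - R i j k l m"
    and "R i k l m j = R i k j m l - R i k j l m"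
    and "R i l k m j = R i l j m k + R i j k l m - R i k j l m"
    and "R j k l m i = R i j k l m - R i k j l m - R i j k m l + R i k j m l"
    and "R j l k m i = R i l j m k + R i j k l m - R i k j l m - R i j k m l"
proof -
  note skew12 = is_acdctD(1)[OF assms] and skew34 = is_acdctD(2)[OF assms]
    and pair = is_acdctD(3)[OF assms] and b1 = is_acdctD(4)[OF assms]
    and b2 = is_acdctD(5)[OF assms]
  show k: "R i j l m k = R i j k m l - R i j k l m"
    using b2[of i j k l m] skew34[of i j k m l] by linarith
  show "R i k l m j = R i k j m l - R i k j l m"
    using b2[of i k j l m] skew34[of i k j m l] by linarith
  show "R i l k m j = R i l j m k + R i j k l m - R i k j l m"
    using b2[of i l j m k] skew34[of i l k m j] skew34[of i l j k m] b1[of i j k l m]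
      skew34[of i k j l m] by linarith
  show "R j k l m i = R i j k l m - R i k j l m - R i j k m l + R i k j m l"
    using b2[of j k i l m] pair[of j k i l m] b1[of i j k l m] skew34[of i k j l m]
      pair[of j k m i l] skew12[of m i j k l] b1[of i j k m l] skew34[of i k j m l]
    by linarith
  show "R j l k m i = R i l j m k + R i j k l m - R i k j l m - R i j k m l"
    using b2[of j l i k m] pair[of j l i k m] pair[of j l m i k] skew12[of m i j l k]
      b1[of i j l m k] skew34[of i l j m k] k by linarith
qed

text \<open>Oriented instances rewriting \<open>R\<close> at each permutation of \<open>(i, j, k, l, m)\<close> to a
  combination of \<open>R i j k l m\<close>, \<open>R i j k m l\<close>, \<open>R i k j l m\<close>, \<open>R i k j m l\<close> and \<open>R i l j m k\<close>:
  for each last index, the orbit rules and \<open>acdct_first_bianchi\<close> reduce to two values, and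
  \<open>acdct_last_index\<close> expresses those in terms of the five.\<close>

context
  fixes i j k l m :: 'n
begin

lemmas acdct_normal_form =
  acdct_orbit[where a = i and b = j and c = k and d = l and e = m]
  acdct_orbit[where a = i and b = k and c = j and d = l and e = m]
  acdct_orbit[where a = i and b = l and c = j and d = k and e = m]
  acdct_first_bianchi[where a = i and b = j and c = k and d = l and e = m]
  acdct_orbit[where a = i and b = j and c = k and d = m and e = l]
  acdct_orbit[where a = i and b = k and c = j and d = m and e = l]
  acdct_orbit[where a = i and b = m and c = j and d = k and e = l]
  acdct_first_bianchi[where a = i and b = j and c = k and d = m and e = l]
  acdct_orbit[where a = i and b = j and c = l and d = m and e = k]
  acdct_orbit[where a = i and b = l and c = j and d = m and e = k]
  acdct_orbit[where a = i and b = m and c = j and d = l and e = k]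
  acdct_first_bianchi[where a = i and b = j and c = l and d = m and e = k]
  acdct_orbit[where a = i and b = k and c = l and d = m and e = j]
  acdct_orbit[where a = i and b = l and c = k and d = m and e = j]
  acdct_orbit[where a = i and b = m and c = k and d = l and e = j]
  acdct_first_bianchi[where a = i and b = k and c = l and d = m and e = j]
  acdct_orbit[where a = j and b = k and c = l and d = m and e = i]
  acdct_orbit[where a = j and b = l and c = k and d = m and e = i]
  acdct_orbit[where a = j and b = m and c = k and d = l and e = i]
  acdct_first_bianchi[where a = j and b = k and c = l and d = m and e = i]
  acdct_last_index

end

section \<open>Explicit preimages under the dual Young symmetrizer\<close>

definition U_s_of :: "'n tensor3 \<Rightarrow> 'n tensor3" where
  "U_s_of Z = (\<lambda>x y z. 2 * (Z x y z + Z y x z) - (Z x z y + Z y z x + Z z x y + Z z y x))"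

definition U_a_of :: "'n tensor3 \<Rightarrow> 'n tensor3" where
  "U_a_of Z = (\<lambda>x y z. 2 * (Z x y z - Z y x z) - (Z y z x - Z z y x + Z z x y - Z x z y))"

lemma U_s_of_in_U_s: "U_s_of Z \<in> U_s"
proof -
  let ?T = "\<lambda>x y z. 3 * (Z x y z + Z y x z)"
  have "U_s_of Z = ?T - sym3 ?T"
    by (simp add: fun_eq_iff U_s_of_def sym3_def field_simps)
  then show ?thesis
    unfolding U_s_def by force
qed

lemma U_a_of_in_U_a: "U_a_of Z \<in> U_a"
proof -
  let ?T = "\<lambda>x y z. 3 * (Z x y z - Z y x z)"
  have "U_a_of Z = ?T - alt3 ?T"
    by (simp add: fun_eq_iff U_a_of_def alt3_def field_simps)
  then show ?thesis
    unfolding U_a_def by force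
qed

text \<open>The scalars normalise \<open>y*(Q)\<close> to \<open>R\<close>; they were obtained by solving the linear
  condition on the five basis values.\<close>

lemma gstar_yt_pair12_sym_U_s:
  assumes "is_acdct R"
  shows "act5 (gstar yt) (pair12 1 (\<lambda>a b. U_s_of (\<lambda>x y z. - R a x b y z / 48))) i j k l m =
    R i j k l m"
  unfolding act5_gstar_yt col_alt_def row_sym_def pair12_def U_s_of_def
  by (simp only: acdct_normal_form[OF assms, where i = i and j = j and k = k and l = l and m = m])
    (simp add: algebra_simps)

lemma gstar_yt_pair12_sym_U_a:
  assumes "is_acdct R"
  shows "act5 (gstar yt) (pair12 1 (\<lambda>a b. U_a_of (\<lambda>x y z. R a x b z y / 72))) i j k l m =
    R i j k l m"
  unfolding act5_gstar_yt col_alt_def row_sym_def pair12_def U_a_of_def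
  by (simp only: acdct_normal_form[OF assms, where i = i and j = j and k = k and l = l and m = m])
    (simp add: algebra_simps)

lemma gstar_yt_pair12_alt_U_s:
  assumes "is_acdct R"
  shows "act5 (gstar yt) (pair12 (- 1) (\<lambda>a b. U_s_of (\<lambda>x y z. - R a b x z y / 144))) i j k l m =
    R i j k l m"
  unfolding act5_gstar_yt col_alt_def row_sym_def pair12_def U_s_of_def
  by (simp only: acdct_normal_form[OF assms, where i = i and j = j and k = k and l = l and m = m])
    (simp add: algebra_simps)

lemma gstar_yt_pair12_alt_U_a:
  assumes "is_acdct R"
  shows "act5 (gstar yt) (pair12 (- 1) (\<lambda>a b. U_a_of (\<lambda>x y z. R a b x y z / 288))) i j k l m =
    R i j k l m"
  unfolding act5_gstar_yt col_alt_def row_sym_def pair12_def U_a_of_def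
  by (simp only: acdct_normal_form[OF assms, where i = i and j = j and k = k and l = l and m = m])
    (simp add: algebra_simps)

lemma gstar_yt_pair45_sym_U_s:
  assumes "is_acdct R"
  shows "act5 (gstar yt) (pair45 1 (\<lambda>a b. U_s_of (\<lambda>x y z. - R x z y a b / 72))) i j k l m =
    R i j k l m"
  unfolding act5_gstar_yt col_alt_def row_sym_def pair45_def U_s_of_def
  by (simp only: acdct_normal_form[OF assms, where i = i and j = j and k = k and l = l and m = m])
    (simp add: algebra_simps)

lemma gstar_yt_pair45_sym_U_a:
  assumes "is_acdct R"
  shows "act5 (gstar yt) (pair45 1 (\<lambda>a b. U_a_of (\<lambda>x y z. R x y z a b / 144))) i j k l m =
    R i j k l m"
  unfolding act5_gstar_yt col_alt_def row_sym_def pair45_def U_a_of_def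
  by (simp only: acdct_normal_form[OF assms, where i = i and j = j and k = k and l = l and m = m])
    (simp add: algebra_simps)

lemma gstar_yt_pair45_alt_U_s:
  assumes "is_acdct R"
  shows "act5 (gstar yt) (pair45 (- 1) (\<lambda>a b. U_s_of (\<lambda>x y z. - R x z y a b / 72))) i j k l m =
    R i j k l m"
  unfolding act5_gstar_yt col_alt_def row_sym_def pair45_def U_s_of_def
  by (simp only: acdct_normal_form[OF assms, where i = i and j = j and k = k and l = l and m = m])
    (simp add: algebra_simps)

lemma gstar_yt_pair45_alt_U_a:
  assumes "is_acdct R"
  shows "act5 (gstar yt) (pair45 (- 1) (\<lambda>a b. U_a_of (\<lambda>x y z. R x y z a b / 144))) i j k l m =
    R i j k l m"
  unfolding act5_gstar_yt col_alt_def row_sym_def pair45_def U_a_of_def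
  by (simp only: acdct_normal_form[OF assms, where i = i and j = j and k = k and l = l and m = m])
    (simp add: algebra_simps)

theorem theorem7:
  fixes U :: "('n::finite) tensor3 set"
  assumes "U = U_s \<or> U = U_a"
  shows "{R. is_acdct R} = finsums {act5 (gstar yt) (tprod23 S u) | S u. symmetric2 S \<and> u \<in> U}
       \<and> {R. is_acdct R} = finsums {act5 (gstar yt) (tprod32 u S) | S u. symmetric2 S \<and> u \<in> U}
       \<and> {R. is_acdct R} = finsums {act5 (gstar yt) (tprod23 A u) | A u. alternating2 A \<and> u \<in> U}
       \<and> {R. is_acdct R} = finsums {act5 (gstar yt) (tprod32 u A) | A u. alternating2 A \<and> u \<in> U}"
  using assms
proof
  assume "U = U_s"
  then show ?thesis
    using acdct_eq_finsums_pair12[where P = symmetric2,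
        OF gstar_yt_pair12_sym_U_s U_s_of_in_U_s symmetric2_pair_unit]
      acdct_eq_finsums_pair45[where P = symmetric2,
        OF gstar_yt_pair45_sym_U_s U_s_of_in_U_s symmetric2_pair_unit]
      acdct_eq_finsums_pair12[where P = alternating2,
        OF gstar_yt_pair12_alt_U_s U_s_of_in_U_s alternating2_pair_unit]
      acdct_eq_finsums_pair45[where P = alternating2,
        OF gstar_yt_pair45_alt_U_s U_s_of_in_U_s alternating2_pair_unit]
    by blast
next
  assume "U = U_a"
  then show ?thesis
    using acdct_eq_finsums_pair12[where P = symmetric2,
        OF gstar_yt_pair12_sym_U_a U_a_of_in_U_a symmetric2_pair_unit]
      acdct_eq_finsums_pair45[where P = symmetric2,
        OF gstar_yt_pair45_sym_U_a U_a_of_in_U_a symmetric2_pair_unit]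
      acdct_eq_finsums_pair12[where P = alternating2,
        OF gstar_yt_pair12_alt_U_a U_a_of_in_U_a alternating2_pair_unit]
      acdct_eq_finsums_pair45[where P = alternating2,
        OF gstar_yt_pair45_alt_U_a U_a_of_in_U_a alternating2_pair_unit]
    by blast
qed

end
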